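(* Let $X=(X^{(1)},\dots,X^{(p)})\in\mathbb{R}^p$ be a random vector with finite second moments and strictly positive definite covariance matrix $\Sigma_X$, let $\epsilon$ be a random variable with $E(\epsilon)=0$, $\mathrm{var}(\epsilon)=\sigma^2>0$, uncorrelated with $X^{(1)},\dots,X^{(p)}$, and let $Y=\delta+\sum_{j=1}^p\beta_jX^{(j)}+\epsilon$ with $\delta\in\mathbb{R}$, $\beta\in\mathbb{R}^p$. Suppose the distribution of $(X,Y)$ is partially faithful. Then for every $j\in\{1,\dots,p\}$: $\rho(Y,X^{(j)}\mid X^{(\mathcal{S})})\neq 0$ for all $\mathcal{S}\subseteq\{j\}^C$ if and only if $\beta_j\neq 0$.
   Context: $\rho(Z^{(1)},Z^{(2)}\mid W)$ denotes the population partial correlation of $Z^{(1)},Z^{(2)}$ given the collection $W$. For $\mathcal{S}\subseteq\{1,\dots,p\}$, $X^{(\mathcal{S})}=\{X^{(j)};j\in\mathcal{S}\}$ and $\{j\}^C=\{1,\dots,p\}\setminus\{j\}$. The distribution of $(X,Y)$ is partially faithful if for every $j$: if $\rho(Y,X^{(j)}\mid X^{(\mathcal{S})})=0$ for some $\mathcal{S}\subseteq\{j\}^C$, then $\rho(Y,X^{(j)}\mid X^{(\{j\}^C)})=0$. *)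

theory Defs
  imports "HOL-Probability.Probability"
begin

definition cov :: "'a measure \<Rightarrow> ('a \<Rightarrow> real) \<Rightarrow> ('a \<Rightarrow> real) \<Rightarrow> real" where
  "cov M U V = (\<integral>\<omega>. (U \<omega> - (\<integral>x. U x \<partial>M)) * (V \<omega> - (\<integral>x. V x \<partial>M)) \<partial>M)"

text \<open>Coefficients of the best linear (affine) predictor of Z from the variables
  W k, k in S: characterised by the normal equations (the residual has mean zero
  and is orthogonal to every W k, k in S).\<close>
definition lin_coeffs :: "'a measure \<Rightarrow> ('a \<Rightarrow> real) \<Rightarrow> (nat \<Rightarrow> 'a \<Rightarrow> real) \<Rightarrow> nat set
      \<Rightarrow> real \<times> (nat \<Rightarrow> real)" where
  "lin_coeffs M Z W S = (SOME (c0, c).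
      (\<integral>\<omega>. Z \<omega> - (c0 + (\<Sum>k\<in>S. c k * W k \<omega>)) \<partial>M) = 0 \<and>
      (\<forall>k\<in>S. (\<integral>\<omega>. (Z \<omega> - (c0 + (\<Sum>k'\<in>S. c k' * W k' \<omega>))) * W k \<omega> \<partial>M) = 0))"

definition resid :: "'a measure \<Rightarrow> ('a \<Rightarrow> real) \<Rightarrow> (nat \<Rightarrow> 'a \<Rightarrow> real) \<Rightarrow> nat set \<Rightarrow> 'a \<Rightarrow> real" where
  "resid M Z W S = (\<lambda>\<omega>. Z \<omega> - (fst (lin_coeffs M Z W S)
                         + (\<Sum>k\<in>S. snd (lin_coeffs M Z W S) k * W k \<omega>)))"

definition pcorr :: "'a measure \<Rightarrow> ('a \<Rightarrow> real) \<Rightarrow> ('a \<Rightarrow> real) \<Rightarrow> (nat \<Rightarrow> 'a \<Rightarrow> real) \<Rightarrow> nat set \<Rightarrow> real" where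
  "pcorr M Z1 Z2 W S =
     cov M (resid M Z1 W S) (resid M Z2 W S)
       / sqrt (cov M (resid M Z1 W S) (resid M Z1 W S) * cov M (resid M Z2 W S) (resid M Z2 W S))"

definition partially_faithful :: "'a measure \<Rightarrow> nat \<Rightarrow> (nat \<Rightarrow> 'a \<Rightarrow> real) \<Rightarrow> ('a \<Rightarrow> real) \<Rightarrow> bool" where
  "partially_faithful M p X Y =
     (\<forall>j\<in>{1..p}. (\<exists>S. S \<subseteq> {1..p} - {j} \<and> pcorr M Y (X j) X S = 0)
                 \<longrightarrow> pcorr M Y (X j) X ({1..p} - {j}) = 0)"

end

theory Submission
  imports Defs
begin

text \<open>Partial correlations are correlations of residuals, i.e. of the differences to the
  orthogonal projections onto the affine span of the conditioning variables in \<open>L\<^sup>2\<close>.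
  Conditioning \<open>Y = \<delta> + \<Sum>\<^sub>k \<beta>\<^sub>k X\<^sub>k + \<epsilon>\<close> on all \<open>X\<^sub>k\<close> with \<open>k \<noteq> j\<close> leaves the residual
  \<open>\<beta>\<^sub>j r + \<epsilon>\<close> of \<open>Y\<close>, where \<open>r\<close> is the residual of \<open>X\<^sub>j\<close> and \<open>\<epsilon>\<close> is orthogonal to \<open>r\<close>.
  So the partial correlation is \<open>\<beta>\<^sub>j q / sqrt ((\<beta>\<^sub>j\<^sup>2 q + \<sigma>\<^sup>2) q)\<close> with \<open>q = var r\<close>, and
  \<open>q > 0\<close> by positive definiteness of \<open>\<Sigma>\<^sub>X\<close>; it vanishes iff \<open>\<beta>\<^sub>j = 0\<close>. Partial faithfulness
  transfers non-vanishing from this conditioning set to all others.\<close>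

definition L2 :: "'a measure \<Rightarrow> ('a \<Rightarrow> real) \<Rightarrow> bool" where
  "L2 M f \<longleftrightarrow> f \<in> borel_measurable M \<and> integrable M (\<lambda>x. (f x)\<^sup>2)"

definition linear_predictors :: "(nat \<Rightarrow> 'a \<Rightarrow> real) \<Rightarrow> nat set \<Rightarrow> ('a \<Rightarrow> real) set" where
  "linear_predictors W S = {f. \<exists>c0 c. f = (\<lambda>\<omega>. c0 + (\<Sum>k\<in>S. c k * W k \<omega>))}"

definition orth_predictors :: "'a measure \<Rightarrow> (nat \<Rightarrow> 'a \<Rightarrow> real) \<Rightarrow> nat set \<Rightarrow> ('a \<Rightarrow> real) \<Rightarrow> bool" where
  "orth_predictors M W S f \<longleftrightarrow> (\<forall>v\<in>linear_predictors W S. (\<integral>\<omega>. f \<omega> * v \<omega> \<partial>M) = 0)"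

lemma linear_predictors_const: "(\<lambda>_. c) \<in> linear_predictors W S"
  unfolding linear_predictors_def by (intro CollectI exI[of _ c] exI[of _ "\<lambda>_. 0"]) simp

lemma linear_predictors_add:
  assumes "u \<in> linear_predictors W S" "v \<in> linear_predictors W S"
  shows "(\<lambda>x. u x + v x) \<in> linear_predictors W S"
proof -
  obtain a0 a b0 b where u: "u = (\<lambda>\<omega>. a0 + (\<Sum>k\<in>S. a k * W k \<omega>))"
    and v: "v = (\<lambda>\<omega>. b0 + (\<Sum>k\<in>S. b k * W k \<omega>))"
    using assms unfolding linear_predictors_def by blast
  have "(\<lambda>x. u x + v x) = (\<lambda>\<omega>. (a0 + b0) + (\<Sum>k\<in>S. (a k + b k) * W k \<omega>))"
    unfolding u v by (auto simp: algebra_simps sum.distrib)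
  then show ?thesis
    unfolding linear_predictors_def by (intro CollectI exI[of _ "a0 + b0"] exI[of _ "\<lambda>k. a k + b k"])
qed

lemma linear_predictors_scale:
  assumes "u \<in> linear_predictors W S"
  shows "(\<lambda>x. t * u x) \<in> linear_predictors W S"
proof -
  obtain a0 a where u: "u = (\<lambda>\<omega>. a0 + (\<Sum>k\<in>S. a k * W k \<omega>))"
    using assms unfolding linear_predictors_def by blast
  have "(\<lambda>x. t * u x) = (\<lambda>\<omega>. t * a0 + (\<Sum>k\<in>S. (t * a k) * W k \<omega>))"
    unfolding u by (auto simp: algebra_simps sum_distrib_left)
  then show ?thesis
    unfolding linear_predictors_def by (intro CollectI exI[of _ "t * a0"] exI[of _ "\<lambda>k. t * a k"])
qed

lemma linear_predictors_diff:
  "u \<in> linear_predictors W S \<Longrightarrow> v \<in> linear_predictors W S \<Longrightarrow> (\<lambda>x. u x - v x) \<in> linear_predictors W S"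
  using linear_predictors_add[of u W S "\<lambda>x. (-1) * v x"] linear_predictors_scale[of v W S "-1"] by simp

lemma linear_predictors_var:
  assumes "finite S" "k \<in> S"
  shows "W k \<in> linear_predictors W S"
proof -
  have "(\<Sum>k'\<in>S. (if k' = k then 1 else 0) * W k' \<omega>) = W k \<omega>" for \<omega>
  proof -
    have "(\<Sum>k'\<in>S. (if k' = k then 1 else 0) * W k' \<omega>) = (\<Sum>k'\<in>S. if k' = k then W k' \<omega> else 0)"
      by (rule sum.cong) auto
    then show ?thesis using assms by (simp add: sum.delta)
  qed
  then have "W k = (\<lambda>\<omega>. 0 + (\<Sum>k'\<in>S. (if k' = k then 1 else 0) * W k' \<omega>))" by simp
  then show ?thesis
    unfolding linear_predictors_def by (intro CollectI exI[of _ 0] exI[of _ "\<lambda>k'. if k' = k then 1 else 0"])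
qed

lemma linear_predictors_mono:
  assumes "finite T" "S \<subseteq> T"
  shows "linear_predictors W S \<subseteq> linear_predictors W T"
proof
  fix u assume "u \<in> linear_predictors W S"
  then obtain a0 a where u: "u = (\<lambda>\<omega>. a0 + (\<Sum>k\<in>S. a k * W k \<omega>))"
    unfolding linear_predictors_def by blast
  have "(\<Sum>k\<in>T. (if k \<in> S then a k else 0) * W k \<omega>) = (\<Sum>k\<in>S. a k * W k \<omega>)" for \<omega>
  proof -
    have "(\<Sum>k\<in>T. (if k \<in> S then a k else 0) * W k \<omega>) = (\<Sum>k\<in>T. if k \<in> S then a k * W k \<omega> else 0)"
      by (rule sum.cong) auto
    then show ?thesis using assms by (simp add: sum.If_cases Int_absorb1)
  qed
  then have "u = (\<lambda>\<omega>. a0 + (\<Sum>k\<in>T. (if k \<in> S then a k else 0) * W k \<omega>))"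
    unfolding u by simp
  then show "u \<in> linear_predictors W T"
    unfolding linear_predictors_def by (intro CollectI exI[of _ a0] exI[of _ "\<lambda>k. if k \<in> S then a k else 0"])
qed

context prob_space
begin

lemma L2_integrable_mult:
  assumes f: "L2 M f" and g: "L2 M g"
  shows "integrable M (\<lambda>x. f x * g x)"
proof (rule Bochner_Integration.integrable_bound)
  show "integrable M (\<lambda>x. (f x)\<^sup>2 + (g x)\<^sup>2)" using f g unfolding L2_def by auto
  show "(\<lambda>x. f x * g x) \<in> borel_measurable M" using f g unfolding L2_def by auto
  have "\<bar>f x * g x\<bar> \<le> (f x)\<^sup>2 + (g x)\<^sup>2" for x
  proof -
    have "2 * (\<bar>f x\<bar> * \<bar>g x\<bar>) \<le> \<bar>f x\<bar>\<^sup>2 + \<bar>g x\<bar>\<^sup>2"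
      using sum_squares_bound[of "\<bar>f x\<bar>" "\<bar>g x\<bar>"] by (simp add: mult.assoc)
    moreover have "0 \<le> \<bar>f x\<bar> * \<bar>g x\<bar>" by simp
    ultimately show ?thesis by (simp only: abs_mult power2_abs)
  qed
  then show "AE x in M. norm (f x * g x) \<le> norm ((f x)\<^sup>2 + (g x)\<^sup>2)" by simp
qed

lemma L2_const: "L2 M (\<lambda>_. c)"
  unfolding L2_def by simp

lemma L2_integrable: "L2 M f \<Longrightarrow> integrable M f"
  using L2_integrable_mult[of f "\<lambda>_. 1"] L2_const by simp

lemma L2_add:
  assumes f: "L2 M f" and g: "L2 M g"
  shows "L2 M (\<lambda>x. f x + g x)"
proof -
  have "integrable M (\<lambda>x. (f x)\<^sup>2 + 2 * (f x * g x) + (g x)\<^sup>2)"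
    using f g L2_integrable_mult[OF f g] unfolding L2_def by auto
  then show ?thesis using f g unfolding L2_def by (auto simp: power2_sum ac_simps)
qed

lemma L2_scale: "L2 M f \<Longrightarrow> L2 M (\<lambda>x. t * f x)"
  unfolding L2_def by (auto simp: power_mult_distrib)

lemma L2_diff: "L2 M f \<Longrightarrow> L2 M g \<Longrightarrow> L2 M (\<lambda>x. f x - g x)"
  using L2_add[of f "\<lambda>x. (-1) * g x"] L2_scale[of g "-1"] by simp

lemma L2_sum: "(\<And>i. i \<in> I \<Longrightarrow> L2 M (f i)) \<Longrightarrow> L2 M (\<lambda>x. \<Sum>i\<in>I. f i x)"
proof (induction I rule: infinite_finite_induct)
  case (insert a A)
  then show ?case using L2_add[of "f a" "\<lambda>x. \<Sum>i\<in>A. f i x"] by simp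
qed (simp_all add: L2_const)

lemma L2_lin_comb: "(\<And>i. i \<in> I \<Longrightarrow> L2 M (W i)) \<Longrightarrow> L2 M (\<lambda>x. \<Sum>i\<in>I. c i * W i x)"
  by (intro L2_sum L2_scale)

lemma L2_linear_predictor:
  assumes "\<And>k. k \<in> S \<Longrightarrow> L2 M (W k)" "v \<in> linear_predictors W S"
  shows "L2 M v"
  using assms L2_add[OF L2_const L2_lin_comb] unfolding linear_predictors_def by blast

lemma AE_zero_if_integral_square_zero:
  assumes "L2 M a" "(\<integral>x. a x * a x \<partial>M) = 0"
  shows "AE x in M. a x = 0"
  using integral_nonneg_eq_0_iff_AE[OF L2_integrable_mult[OF assms(1,1)]] assms(2) by simp

lemma cov_eq_integral:
  assumes f: "L2 M f" and g: "L2 M g"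
  shows "cov M f g = (\<integral>x. f x * g x \<partial>M) - (\<integral>x. f x \<partial>M) * (\<integral>x. g x \<partial>M)"
proof -
  let ?a = "\<integral>x. f x \<partial>M" and ?b = "\<integral>x. g x \<partial>M"
  have fi: "integrable M f" and gi: "integrable M g" using f g by (auto intro: L2_integrable)
  have fg: "integrable M (\<lambda>x. f x * g x)" using L2_integrable_mult[OF f g] .
  have "cov M f g = (\<integral>x. (f x * g x - ?b * f x) - (?a * g x - ?a * ?b) \<partial>M)"
    unfolding cov_def by (simp add: algebra_simps)
  also have "\<dots> = (\<integral>x. f x * g x \<partial>M) - ?b * ?a - (?a * ?b - ?a * ?b)"
    using fi gi fg by (simp add: Bochner_Integration.integral_diff prob_space)
  finally show ?thesis by simp
qed

lemma cov_sym: "cov M f g = cov M g f"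
  unfolding cov_def by (simp add: mult.commute)

lemma cov_add_const:
  assumes "integrable M f" "integrable M g"
  shows "cov M (\<lambda>x. f x + a) (\<lambda>x. g x + b) = cov M f g"
  using assms by (simp add: cov_def prob_space)

lemma cov_lin_comb_left:
  assumes W: "\<And>i. i \<in> I \<Longrightarrow> L2 M (W i)" and g: "L2 M g"
  shows "cov M (\<lambda>x. \<Sum>i\<in>I. c i * W i x) g = (\<Sum>i\<in>I. c i * cov M (W i) g)"
proof -
  have i1: "\<And>i. i \<in> I \<Longrightarrow> integrable M (\<lambda>x. c i * (W i x * g x))"
    using L2_integrable_mult[OF W g] by simp
  have i2: "\<And>i. i \<in> I \<Longrightarrow> integrable M (\<lambda>x. c i * W i x)"
    using L2_integrable[OF W] by simp
  have "cov M (\<lambda>x. \<Sum>i\<in>I. c i * W i x) g =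
     (\<integral>x. (\<Sum>i\<in>I. c i * (W i x * g x)) \<partial>M) - (\<integral>x. (\<Sum>i\<in>I. c i * W i x) \<partial>M) * (\<integral>x. g x \<partial>M)"
    using cov_eq_integral[OF L2_lin_comb[OF W] g] by (simp add: sum_distrib_right mult.assoc)
  also have "\<dots> = (\<Sum>i\<in>I. c i * ((\<integral>x. W i x * g x \<partial>M) - (\<integral>x. W i x \<partial>M) * (\<integral>x. g x \<partial>M)))"
    by (simp add: Bochner_Integration.integral_sum[OF i1] Bochner_Integration.integral_sum[OF i2]
        sum_distrib_right right_diff_distrib sum_subtractf mult.assoc)
  also have "\<dots> = (\<Sum>i\<in>I. c i * cov M (W i) g)"
    using cov_eq_integral[OF W g] by simp
  finally show ?thesis .
qed

lemma quadratic_form_cov_eq_cov_lin_comb: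
  assumes W: "\<And>i. i \<in> I \<Longrightarrow> L2 M (W i)"
  shows "(\<Sum>i\<in>I. \<Sum>k\<in>I. c i * c k * cov M (W i) (W k)) =
         cov M (\<lambda>x. \<Sum>i\<in>I. c i * W i x) (\<lambda>x. \<Sum>i\<in>I. c i * W i x)"
proof -
  have "cov M (\<lambda>x. \<Sum>i\<in>I. c i * W i x) (\<lambda>x. \<Sum>i\<in>I. c i * W i x)
      = (\<Sum>i\<in>I. c i * cov M (\<lambda>x. \<Sum>k\<in>I. c k * W k x) (W i))"
    by (simp add: cov_lin_comb_left[OF W L2_lin_comb[OF W]] cov_sym)
  also have "\<dots> = (\<Sum>i\<in>I. c i * (\<Sum>k\<in>I. c k * cov M (W k) (W i)))"
    by (simp add: cov_lin_comb_left[OF W W])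
  finally show ?thesis
    by (simp add: sum_distrib_left mult.assoc cov_sym[of "W _" "W _"])
qed

lemma orth_predictorsI:
  assumes W: "\<And>k. k \<in> S \<Longrightarrow> L2 M (W k)" and f: "L2 M f" and mean: "(\<integral>x. f x \<partial>M) = 0"
    and uncorr: "\<And>k. k \<in> S \<Longrightarrow> (\<integral>x. f x * W k x \<partial>M) = 0"
  shows "orth_predictors M W S f"
  unfolding orth_predictors_def
proof
  fix v assume "v \<in> linear_predictors W S"
  then obtain c0 c where v: "v = (\<lambda>\<omega>. c0 + (\<Sum>k\<in>S. c k * W k \<omega>))"
    unfolding linear_predictors_def by blast
  have i1: "integrable M (\<lambda>x. c0 * f x)" using L2_integrable[OF f] by simp
  have i2: "\<And>k. k \<in> S \<Longrightarrow> integrable M (\<lambda>x. c k * (f x * W k x))"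
    using L2_integrable_mult[OF f W] by simp
  have "(\<integral>x. f x * v x \<partial>M) = (\<integral>x. c0 * f x + (\<Sum>k\<in>S. c k * (f x * W k x)) \<partial>M)"
    unfolding v by (simp add: algebra_simps sum_distrib_left)
  also have "\<dots> = c0 * (\<integral>x. f x \<partial>M) + (\<Sum>k\<in>S. c k * (\<integral>x. f x * W k x \<partial>M))"
    using i1 i2 by (simp add: Bochner_Integration.integrable_sum Bochner_Integration.integral_sum)
  finally show "(\<integral>x. f x * v x \<partial>M) = 0" using mean uncorr by simp
qed

lemma orth_predictorsD:
  assumes "finite S" "orth_predictors M W S f"
  shows "(\<integral>x. f x \<partial>M) = 0" "\<And>k. k \<in> S \<Longrightarrow> (\<integral>x. f x * W k x \<partial>M) = 0"
  using assms linear_predictors_const[of 1 W S] linear_predictors_var[of S]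
  unfolding orth_predictors_def by auto

lemma orth_predictors_add:
  assumes W: "\<And>k. k \<in> S \<Longrightarrow> L2 M (W k)" and f: "L2 M f" and g: "L2 M g"
    and "orth_predictors M W S f" "orth_predictors M W S g"
  shows "orth_predictors M W S (\<lambda>x. f x + g x)"
  unfolding orth_predictors_def
proof
  fix v assume v: "v \<in> linear_predictors W S"
  have vL: "L2 M v" using L2_linear_predictor[OF W v] .
  have "(\<integral>x. (f x + g x) * v x \<partial>M) = (\<integral>x. f x * v x \<partial>M) + (\<integral>x. g x * v x \<partial>M)"
    using Bochner_Integration.integral_add[OF L2_integrable_mult[OF f vL] L2_integrable_mult[OF g vL]]
    by (simp add: distrib_right)
  then show "(\<integral>x. (f x + g x) * v x \<partial>M) = 0" using assms(4,5) v unfolding orth_predictors_def by simp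
qed

lemma orth_predictors_scale: "orth_predictors M W S f \<Longrightarrow> orth_predictors M W S (\<lambda>x. t * f x)"
  unfolding orth_predictors_def by (simp add: mult.assoc)

lemma orth_predictors_diff:
  assumes W: "\<And>k. k \<in> S \<Longrightarrow> L2 M (W k)" and f: "L2 M f" and g: "L2 M g"
    and "orth_predictors M W S f" "orth_predictors M W S g"
  shows "orth_predictors M W S (\<lambda>x. f x - g x)"
  using orth_predictors_add[OF W f L2_scale[OF g, of "-1"] assms(4) orth_predictors_scale[OF assms(5)]]
  by simp

lemma orth_predictors_mono:
  "finite T \<Longrightarrow> S \<subseteq> T \<Longrightarrow> orth_predictors M W T f \<Longrightarrow> orth_predictors M W S f"
  using linear_predictors_mono[of T S W] unfolding orth_predictors_def by blast

text \<open>The difference \<open>a\<close> is orthogonal to itself, hence zero a.e.\<close>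

lemma integral_mult_eq_if_diff_predictor:
  assumes W: "\<And>k. k \<in> S \<Longrightarrow> L2 M (W k)" and f: "L2 M f" and g: "L2 M g"
    and a: "a \<in> linear_predictors W S"
    and "orth_predictors M W S f" "orth_predictors M W S g"
    and fga: "\<And>x. f x = g x + a x" and h: "L2 M h"
  shows "(\<integral>x. f x * h x \<partial>M) = (\<integral>x. g x * h x \<partial>M)"
proof -
  have aL: "L2 M a" using L2_linear_predictor[OF W a] .
  have "(\<integral>x. a x * a x \<partial>M) = (\<integral>x. f x * a x \<partial>M) - (\<integral>x. g x * a x \<partial>M)"
    using Bochner_Integration.integral_diff[OF L2_integrable_mult[OF f aL] L2_integrable_mult[OF g aL]]
    by (simp add: fga algebra_simps)
  also have "\<dots> = 0" using assms(5,6) a unfolding orth_predictors_def by simp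
  finally have "AE x in M. a x = 0" using AE_zero_if_integral_square_zero[OF aL] by simp
  then have "(\<integral>x. a x * h x \<partial>M) = 0" by (intro integral_eq_zero_AE) auto
  moreover have "(\<integral>x. f x * h x \<partial>M) = (\<integral>x. g x * h x \<partial>M) + (\<integral>x. a x * h x \<partial>M)"
    using Bochner_Integration.integral_add[OF L2_integrable_mult[OF g h] L2_integrable_mult[OF aL h]]
    by (simp add: fga algebra_simps)
  ultimately show ?thesis by simp
qed

text \<open>Gram--Schmidt step. If \<open>rW\<close> has norm zero it vanishes a.e., so any \<open>t\<close> works, in
  particular the junk value \<open>t = 0\<close> coming from \<open>x / 0 = 0\<close>.\<close>

lemma orth_predictors_insert:
  assumes fin: "finite S" and W: "\<And>i. i \<in> insert k S \<Longrightarrow> L2 M (W i)"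
    and rZ: "L2 M rZ" "orth_predictors M W S rZ"
    and vW: "vW \<in> linear_predictors W S" "orth_predictors M W S (\<lambda>x. W k x - vW x)"
  defines "rW \<equiv> \<lambda>x. W k x - vW x"
  defines "t \<equiv> (\<integral>x. rZ x * rW x \<partial>M) / (\<integral>x. rW x * rW x \<partial>M)"
  shows "orth_predictors M W (insert k S) (\<lambda>x. rZ x - t * rW x)"
proof -
  let ?r = "\<lambda>x. rZ x - t * rW x"
  let ?q = "\<integral>x. rW x * rW x \<partial>M"
  have WS: "\<And>i. i \<in> S \<Longrightarrow> L2 M (W i)" using W by auto
  have LvW: "L2 M vW" using L2_linear_predictor[OF WS vW(1)] .
  have LrW: "L2 M rW" unfolding rW_def using L2_diff[OF W[of k] LvW] by simp
  have Lr: "L2 M ?r" using L2_diff[OF rZ(1) L2_scale[OF LrW]] .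
  have orS: "orth_predictors M W S ?r"
    using orth_predictors_diff[OF WS rZ(1) L2_scale[OF LrW] rZ(2) orth_predictors_scale]
      vW(2) unfolding rW_def by blast
  have "(\<integral>x. ?r x * rW x \<partial>M) = (\<integral>x. rZ x * rW x \<partial>M) - t * ?q"
    using Bochner_Integration.integral_diff[OF L2_integrable_mult[OF rZ(1) LrW]
        integrable_mult_right[OF L2_integrable_mult[OF LrW LrW]], of t]
    by (simp add: algebra_simps)
  also have "\<dots> = 0"
  proof (cases "?q = 0")
    case True
    then have "AE x in M. rW x = 0" using AE_zero_if_integral_square_zero[OF LrW] by simp
    then have "(\<integral>x. rZ x * rW x \<partial>M) = 0" by (intro integral_eq_zero_AE) auto
    then show ?thesis using True by simp
  qed (simp add: t_def)
  finally have r_rW: "(\<integral>x. ?r x * rW x \<partial>M) = 0" .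
  have "(\<integral>x. ?r x * W k x \<partial>M) = (\<integral>x. ?r x * rW x \<partial>M) + (\<integral>x. ?r x * vW x \<partial>M)"
    using Bochner_Integration.integral_add[OF L2_integrable_mult[OF Lr LrW] L2_integrable_mult[OF Lr LvW]]
    by (simp add: rW_def algebra_simps)
  also have "\<dots> = 0" using r_rW orS vW(1) unfolding orth_predictors_def by simp
  finally have "(\<integral>x. ?r x * W k x \<partial>M) = 0" .
  then show ?thesis
    using orth_predictorsD[OF fin orS] by (intro orth_predictorsI[OF W Lr]) auto
qed

lemma exists_orth_projection:
  assumes "finite S" "\<And>k. k \<in> S \<Longrightarrow> L2 M (W k)" "L2 M Z"
  shows "\<exists>v\<in>linear_predictors W S. orth_predictors M W S (\<lambda>x. Z x - v x)"
  using assms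
proof (induction S arbitrary: Z rule: finite_induct)
  case empty
  let ?m = "\<integral>x. Z x \<partial>M"
  have "orth_predictors M W {} (\<lambda>x. Z x - ?m)"
    using L2_integrable[OF empty.prems(2)]
    by (intro orth_predictorsI L2_diff[OF empty.prems(2) L2_const]) (auto simp: prob_space)
  then show ?case by (intro bexI[of _ "\<lambda>_. ?m"] linear_predictors_const)
next
  case (insert k S)
  have WS: "\<And>i. i \<in> S \<Longrightarrow> L2 M (W i)" using insert.prems by auto
  obtain vZ where vZ: "vZ \<in> linear_predictors W S" "orth_predictors M W S (\<lambda>x. Z x - vZ x)"
    using insert.IH[OF WS insert.prems(2)] by blast
  obtain vW where vW: "vW \<in> linear_predictors W S" "orth_predictors M W S (\<lambda>x. W k x - vW x)"
    using insert.IH[OF WS insert.prems(1)] by blast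
  have LrZ: "L2 M (\<lambda>x. Z x - vZ x)"
    using L2_diff[OF insert.prems(2) L2_linear_predictor[OF WS vZ(1)]] .
  obtain t where "orth_predictors M W (insert k S) (\<lambda>x. (Z x - vZ x) - t * (W k x - vW x))"
    using orth_predictors_insert[OF insert.hyps(1) insert.prems(1) LrZ vZ(2) vW] by blast
  moreover have "(\<lambda>x. vZ x + t * (W k x - vW x)) \<in> linear_predictors W (insert k S)"
    using linear_predictors_mono[of "insert k S" S W] insert.hyps(1) vZ(1) vW(1)
    by (intro linear_predictors_add linear_predictors_scale linear_predictors_diff
        linear_predictors_var) auto
  ultimately show ?case by (intro bexI[of _ "\<lambda>x. vZ x + t * (W k x - vW x)"]) (auto simp: algebra_simps)
qed

lemma resid_eq_diff_predictor:
  obtains v where "v \<in> linear_predictors W S" "resid M Z W S = (\<lambda>x. Z x - v x)"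
  unfolding resid_def linear_predictors_def by blast

lemma L2_resid:
  assumes W: "\<And>k. k \<in> S \<Longrightarrow> L2 M (W k)" and Z: "L2 M Z"
  shows "L2 M (resid M Z W S)"
proof -
  obtain v where "v \<in> linear_predictors W S" "resid M Z W S = (\<lambda>x. Z x - v x)"
    by (rule resid_eq_diff_predictor)
  then show ?thesis using L2_diff[OF Z L2_linear_predictor[OF W]] by simp
qed

lemma orth_predictors_resid:
  assumes fin: "finite S" and W: "\<And>k. k \<in> S \<Longrightarrow> L2 M (W k)" and Z: "L2 M Z"
  shows "orth_predictors M W S (resid M Z W S)"
proof -
  define normal_eqs where "normal_eqs = (\<lambda>(c0::real, c::nat \<Rightarrow> real).
      (\<integral>\<omega>. Z \<omega> - (c0 + (\<Sum>k\<in>S. c k * W k \<omega>)) \<partial>M) = 0 \<and>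
      (\<forall>k\<in>S. (\<integral>\<omega>. (Z \<omega> - (c0 + (\<Sum>k'\<in>S. c k' * W k' \<omega>))) * W k \<omega> \<partial>M) = 0))"
  obtain v0 where "v0 \<in> linear_predictors W S" "orth_predictors M W S (\<lambda>x. Z x - v0 x)"
    using exists_orth_projection[of S W Z] fin W Z by blast
  then obtain c0 c where "normal_eqs (c0, c)"
    using orth_predictorsD[OF fin] unfolding linear_predictors_def normal_eqs_def by fastforce
  then have "normal_eqs (lin_coeffs M Z W S)"
    unfolding lin_coeffs_def normal_eqs_def[symmetric] by (rule someI)
  then have mean: "(\<integral>x. resid M Z W S x \<partial>M) = 0"
    and uncorr: "\<And>k. k \<in> S \<Longrightarrow> (\<integral>x. resid M Z W S x * W k x \<partial>M) = 0"
    unfolding resid_def normal_eqs_def by (auto split: prod.splits)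
  moreover have "L2 M (resid M Z W S)" using L2_resid[of S W, OF W Z] .
  ultimately show ?thesis using orth_predictorsI[of S W] W by blast
qed

lemma integral_resid_linear_model:
  assumes fin: "finite S" and W: "\<And>k. k \<in> S \<Longrightarrow> L2 M (W k)" and V: "L2 M V"
    and e: "L2 M e" "orth_predictors M W S e"
    and u: "u \<in> linear_predictors W S"
    and Z: "\<And>\<omega>. Z \<omega> = u \<omega> + b * V \<omega> + e \<omega>"
    and h: "L2 M h"
  shows "(\<integral>x. resid M Z W S x * h x \<partial>M)
           = b * (\<integral>x. resid M V W S x * h x \<partial>M) + (\<integral>x. e x * h x \<partial>M)"
proof -
  let ?rV = "resid M V W S" and ?rZ = "resid M Z W S"
  let ?g = "\<lambda>x. b * ?rV x + e x"
  obtain vV where vV: "vV \<in> linear_predictors W S" "?rV = (\<lambda>x. V x - vV x)"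
    by (rule resid_eq_diff_predictor)
  obtain vZ where vZ: "vZ \<in> linear_predictors W S" "?rZ = (\<lambda>x. Z x - vZ x)"
    by (rule resid_eq_diff_predictor)
  have LZ: "L2 M Z"
    using L2_add[OF L2_add[OF L2_linear_predictor[OF W u] L2_scale[OF V]] e(1)] Z by presburger
  have LrV: "L2 M ?rV" using L2_resid[OF W V] .
  have LrZ: "L2 M ?rZ" using L2_resid[OF W LZ] .
  have Lg: "L2 M ?g" using L2_add[OF L2_scale[OF LrV] e(1)] .
  have og: "orth_predictors M W S ?g"
    using orth_predictors_add[OF W L2_scale[OF LrV] e(1)
        orth_predictors_scale[OF orth_predictors_resid[OF fin W V]] e(2)] .
  have "(\<lambda>x. u x - vZ x + b * vV x) \<in> linear_predictors W S"
    using u vZ(1) vV(1) by (intro linear_predictors_add linear_predictors_diff linear_predictors_scale)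
  moreover have "?rZ x = ?g x + (u x - vZ x + b * vV x)" for x
    using vV(2) vZ(2) Z[of x] by (simp add: algebra_simps)
  ultimately have "(\<integral>x. ?rZ x * h x \<partial>M) = (\<integral>x. ?g x * h x \<partial>M)"
    using integral_mult_eq_if_diff_predictor[OF W LrZ Lg _ orth_predictors_resid[OF fin W LZ] og _ h]
    by blast
  also have "\<dots> = b * (\<integral>x. ?rV x * h x \<partial>M) + (\<integral>x. e x * h x \<partial>M)"
    using Bochner_Integration.integral_add[OF integrable_mult_right[OF L2_integrable_mult[OF LrV h]]
        L2_integrable_mult[OF e(1) h]]
    by (simp add: algebra_simps)
  finally show ?thesis .
qed

lemma pcorr_linear_model:
  assumes I: "finite I" "j \<in> I" and W: "\<And>k. k \<in> I \<Longrightarrow> L2 M (W k)"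
    and e: "L2 M e" "orth_predictors M W I e"
    and u: "u \<in> linear_predictors W (I - {j})"
    and Z: "\<And>\<omega>. Z \<omega> = u \<omega> + b * W j \<omega> + e \<omega>"
  defines "q \<equiv> cov M (resid M (W j) W (I - {j})) (resid M (W j) W (I - {j}))"
  shows "pcorr M Z (W j) W (I - {j}) = b * q / sqrt ((b\<^sup>2 * q + cov M e e) * q)"
proof -
  let ?S = "I - {j}"
  let ?rV = "resid M (W j) W ?S" and ?rZ = "resid M Z W ?S"
  have fin: "finite ?S" using I(1) by simp
  have WS: "\<And>k. k \<in> ?S \<Longrightarrow> L2 M (W k)" using W by simp
  have eS: "orth_predictors M W ?S e" using orth_predictors_mono[OF I(1) _ e(2)] by blast
  have moment: "(\<integral>x. ?rZ x * h x \<partial>M) = b * (\<integral>x. ?rV x * h x \<partial>M) + (\<integral>x. e x * h x \<partial>M)"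
    if "L2 M h" for h
    by (rule integral_resid_linear_model[OF fin WS W[OF I(2)] e(1) eS u Z that])
  have LZ: "L2 M Z"
    using L2_add[OF L2_add[OF L2_linear_predictor[OF WS u] L2_scale[OF W[OF I(2)]]] e(1)] Z
    by presburger
  have LrV: "L2 M ?rV" using L2_resid[OF WS W[OF I(2)]] .
  have LrZ: "L2 M ?rZ" using L2_resid[OF WS LZ] .
  obtain vV where vV: "vV \<in> linear_predictors W ?S" "?rV = (\<lambda>x. W j x - vV x)"
    by (rule resid_eq_diff_predictor)
  then have "?rV \<in> linear_predictors W I"
    using vV I linear_predictors_mono[of I ?S W]
    by (auto intro!: linear_predictors_diff linear_predictors_var)
  then have e_rV: "(\<integral>x. e x * ?rV x \<partial>M) = 0" using e(2) unfolding orth_predictors_def by blast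
  have mean_rV: "(\<integral>x. ?rV x \<partial>M) = 0"
    using orth_predictorsD(1)[OF fin orth_predictors_resid[OF fin WS W[OF I(2)]]] .
  have mean_rZ: "(\<integral>x. ?rZ x \<partial>M) = 0"
    using orth_predictorsD(1)[OF fin orth_predictors_resid[OF fin WS LZ]] .
  have mean_e: "(\<integral>x. e x \<partial>M) = 0" using orth_predictorsD(1)[OF I(1) e(2)] .
  have q: "q = (\<integral>x. ?rV x * ?rV x \<partial>M)"
    using cov_eq_integral[OF LrV LrV] mean_rV unfolding q_def by simp
  have s: "cov M e e = (\<integral>x. e x * e x \<partial>M)" using cov_eq_integral[OF e(1) e(1)] mean_e by simp
  have ZV: "(\<integral>x. ?rZ x * ?rV x \<partial>M) = b * q" using moment[OF LrV] e_rV q by simp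
  have Ze: "(\<integral>x. ?rZ x * e x \<partial>M) = cov M e e"
    using moment[OF e(1)] e_rV s by (simp add: mult.commute)
  have "(\<integral>x. ?rZ x * ?rZ x \<partial>M) = b\<^sup>2 * q + cov M e e"
    using moment[OF LrZ] ZV Ze by (simp add: mult.commute power2_eq_square)
  then show ?thesis
    unfolding pcorr_def q_def[symmetric]
    using cov_eq_integral[OF LrZ LrV] cov_eq_integral[OF LrZ LrZ] mean_rV mean_rZ ZV by simp
qed

lemma cov_resid_pos:
  assumes I: "finite I" "j \<in> I" and W: "\<And>k. k \<in> I \<Longrightarrow> L2 M (W k)"
    and pd: "\<And>c. c j \<noteq> 0 \<Longrightarrow> (\<Sum>i\<in>I. \<Sum>k\<in>I. c i * c k * cov M (W i) (W k)) > 0"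
  shows "cov M (resid M (W j) W (I - {j})) (resid M (W j) W (I - {j})) > 0"
proof -
  let ?r = "resid M (W j) W (I - {j})"
  obtain v where "v \<in> linear_predictors W (I - {j})" "?r = (\<lambda>x. W j x - v x)"
    by (rule resid_eq_diff_predictor)
  then obtain d0 d where r: "\<And>x. ?r x = W j x - (d0 + (\<Sum>k\<in>I - {j}. d k * W k x))"
    unfolding linear_predictors_def by auto
  define c where "c = (\<lambda>k. if k = j then 1 else - d k)"
  have lin_comb: "(\<Sum>k\<in>I. c k * W k x) = ?r x + d0" for x
  proof -
    have "(\<Sum>k\<in>I. c k * W k x) = c j * W j x + (\<Sum>k\<in>I - {j}. c k * W k x)"
      using I by (simp add: sum.remove)
    also have "(\<Sum>k\<in>I - {j}. c k * W k x) = - (\<Sum>k\<in>I - {j}. d k * W k x)"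
      unfolding sum_negf[symmetric] by (rule sum.cong) (auto simp: c_def)
    finally show ?thesis using r[of x] by (simp add: c_def)
  qed
  have "integrable M ?r" using L2_integrable L2_resid[of "I - {j}" W "W j"] W I(2) by simp
  then have "cov M ?r ?r = cov M (\<lambda>x. \<Sum>k\<in>I. c k * W k x) (\<lambda>x. \<Sum>k\<in>I. c k * W k x)"
    using cov_add_const[of ?r ?r d0 d0] lin_comb by simp
  also have "\<dots> > 0"
    using pd[of c] quadratic_form_cov_eq_cov_lin_comb[of I W, OF W] by (simp add: c_def)
  finally show ?thesis .
qed

end

theorem corollary1:
  fixes M :: "'a measure" and p :: nat and X :: "nat \<Rightarrow> 'a \<Rightarrow> real"
    and eps Y :: "'a \<Rightarrow> real" and \<delta> :: real and \<beta> :: "nat \<Rightarrow> real"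
  assumes "prob_space M"
    and X_meas: "\<forall>j\<in>{1..p}. X j \<in> borel_measurable M"
    and X_L2: "\<forall>j\<in>{1..p}. integrable M (\<lambda>\<omega>. (X j \<omega>)\<^sup>2)"
    and Sigma_pd: "\<forall>c :: nat \<Rightarrow> real. (\<exists>j\<in>{1..p}. c j \<noteq> 0) \<longrightarrow>
                     (\<Sum>j\<in>{1..p}. \<Sum>k\<in>{1..p}. c j * c k * cov M (X j) (X k)) > 0"
    and eps_meas: "eps \<in> borel_measurable M"
    and eps_L2: "integrable M (\<lambda>\<omega>. (eps \<omega>)\<^sup>2)"
    and eps_mean: "(\<integral>\<omega>. eps \<omega> \<partial>M) = 0"
    and eps_var: "cov M eps eps > 0"
    and eps_uncorr: "\<forall>j\<in>{1..p}. cov M eps (X j) = 0"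
    and Y_def: "\<forall>\<omega>. Y \<omega> = \<delta> + (\<Sum>j\<in>{1..p}. \<beta> j * X j \<omega>) + eps \<omega>"
    and pf: "partially_faithful M p X Y"
  shows "\<forall>j\<in>{1..p}. (\<forall>S. S \<subseteq> {1..p} - {j} \<longrightarrow> pcorr M Y (X j) X S \<noteq> 0) \<longleftrightarrow> \<beta> j \<noteq> 0"
proof
  interpret prob_space M by fact
  fix j assume j: "j \<in> {1..p}"
  let ?S = "{1..p} - {j}"
  define q where "q = cov M (resid M (X j) X ?S) (resid M (X j) X ?S)"
  have XL: "\<And>k. k \<in> {1..p} \<Longrightarrow> L2 M (X k)" using X_meas X_L2 unfolding L2_def by auto
  have epsL: "L2 M eps" using eps_meas eps_L2 unfolding L2_def by simp
  have eps_orth: "orth_predictors M X {1..p} eps"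
    using cov_eq_integral[OF epsL XL] eps_uncorr eps_mean
    by (intro orth_predictorsI[of "{1..p}" X, OF XL epsL eps_mean]) auto
  have "(\<lambda>\<omega>. \<delta> + (\<Sum>k\<in>?S. \<beta> k * X k \<omega>)) \<in> linear_predictors X ?S"
    unfolding linear_predictors_def by blast
  moreover have "Y \<omega> = (\<delta> + (\<Sum>k\<in>?S. \<beta> k * X k \<omega>)) + \<beta> j * X j \<omega> + eps \<omega>" for \<omega>
    using Y_def j by (simp add: sum.remove)
  ultimately have pc: "pcorr M Y (X j) X ?S = \<beta> j * q / sqrt (((\<beta> j)\<^sup>2 * q + cov M eps eps) * q)"
    unfolding q_def using pcorr_linear_model[of "{1..p}" j X, OF _ j XL epsL eps_orth] by blast
  have "q > 0"
    unfolding q_def using Sigma_pd j by (intro cov_resid_pos[of "{1..p}" j X, OF _ j XL]) blast+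
  then have "(\<beta> j)\<^sup>2 * q + cov M eps eps > 0" using eps_var by (simp add: add_nonneg_pos)
  with \<open>q > 0\<close> have "pcorr M Y (X j) X ?S \<noteq> 0 \<longleftrightarrow> \<beta> j \<noteq> 0" unfolding pc by simp
  then show "(\<forall>S. S \<subseteq> ?S \<longrightarrow> pcorr M Y (X j) X S \<noteq> 0) \<longleftrightarrow> \<beta> j \<noteq> 0"
    using pf j unfolding partially_faithful_def by blast
qed

end
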